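(* Let $n,m\in\mathbb N$ and $K\in\mathcal K^n$. Then $\mathrm{Vol}_{nm}(R^m_{nm}K)=\mathrm{Vol}_n(K)^m$.
   Context: A convex body in $\mathbb R^d$ is a compact convex set with nonempty interior; $\mathcal K^n$ is the class of convex bodies in $\mathbb R^n$. Identify $\mathbb R^{nm}=(\mathbb R^n)^m$, writing $\bar x=(x_1,\dots,x_m)$, $x_i\in\mathbb R^n$. The radial function of a compact set $L$ is $\rho_L(y)=\sup\{\lambda>0:\lambda y\in L\}$. For $p>0$, $R^m_pK$ is the star body in $\mathbb R^{nm}$ with radial function $\rho_{R^m_pK}(\bar\theta)^p=\frac{1}{\mathrm{Vol}_n(K)}\int_K\big(\min_{1\le i\le m}\rho_{K-x}(-\theta_i)\big)^p\,dx$ for $\bar\theta\in\mathbb S^{nm-1}$. *)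

theory Defs
  imports "HOL-Analysis.Analysis"
begin

definition convex_body :: "'a::euclidean_space set \<Rightarrow> bool" where
  "convex_body K \<longleftrightarrow> compact K \<and> convex K \<and> interior K \<noteq> {}"

text \<open>Radial function rho_L(y) = sup {lambda > 0. lambda y in L}, with the convention
  that the supremum of the empty set is 0.  (Only used for y nonzero and L compact,
  where the set is bounded.)\<close>
definition radial_fun :: "'a::real_normed_vector set \<Rightarrow> 'a \<Rightarrow> real" where
  "radial_fun L y =
     (if {t. t > 0 \<and> t *\<^sub>R y \<in> L} = {} then 0
      else Sup {t. t > 0 \<and> t *\<^sub>R y \<in> L})"

text \<open>Radial function of R^m_p K at a point theta of R^{nm} = (R^n)^m (used on the unit sphere).
  Components theta_i = 0 contribute rho_{K-x}(0) = +infinity to the minimum, so they are omitted.\<close>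
definition rho_Rmp :: "real \<Rightarrow> (real^'n) set \<Rightarrow> real^'n^'m \<Rightarrow> real" where
  "rho_Rmp p K \<theta> =
     ((1 / measure lebesgue K) *
       integral K (\<lambda>x. (Min ((\<lambda>i. radial_fun ((\<lambda>z. z - x) ` K) (- (\<theta> $ i)))
                               ` {i. \<theta> $ i \<noteq> 0})) powr p)) powr (1 / p)"

definition Rmp :: "real \<Rightarrow> (real^'n) set \<Rightarrow> (real^'n^'m) set" where
  "Rmp p K = {r *\<^sub>R \<theta> | r \<theta>. norm \<theta> = 1 \<and> 0 \<le> r \<and> r \<le> rho_Rmp p K \<theta>}"

end

theory Submission
  imports Defs
begin

text \<open>Up to the factor \<open>1 / Vol K\<close>, the \<open>nm\<close>-th power of the radial function of \<open>R^m_{nm} K\<close> is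
  \<open>\<Phi>(\<theta>) = \<integral>_K min_i \<rho>_{K-x}(-\<theta>_i)^{nm} dx\<close>. Extended to all \<open>y \<noteq> 0\<close>, \<open>\<Phi>\<close> is homogeneous of
  degree \<open>-nm\<close> and \<open>R^m_{nm} K\<close> is its superlevel set at \<open>Vol K\<close>. For such functions the volume
  of the superlevel set at \<open>1\<close> equals the integral of \<open>\<Phi>\<close> over the shell \<open>1 \<le> |y|^{nm} \<le> e\<close>
  (a form of \<open>vol = 1/d \<integral>_S \<rho>^d\<close> that avoids polar coordinates). Exchanging the two integrals,
  for fixed \<open>x \<in> K\<close> the superlevel set of the integrand is \<open>(x - K)^m\<close>, of volume \<open>(Vol K)^m\<close>,
  so the shell integral is \<open>(Vol K)^{m+1}\<close> and the volume of \<open>R^m_{nm} K\<close> is \<open>(Vol K)^m\<close>.\<close>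

lemma vec_lambda_measurable:
  "(\<lambda>f. \<chi> i. f i) \<in> PiM UNIV (\<lambda>_::'m::finite. (lborel::'a::euclidean_space measure)) \<rightarrow>\<^sub>M borel"
proof (subst borel_measurable_euclidean_space, intro ballI)
  fix b :: "'a^'m" assume "b \<in> Basis"
  then obtain i u where b: "b = axis i u" "u \<in> Basis" by (auto simp: Basis_vec_def)
  have "(\<lambda>f. f i \<bullet> u) \<in> PiM UNIV (\<lambda>_::'m. (lborel::'a measure)) \<rightarrow>\<^sub>M borel"
    by measurable
  then show "(\<lambda>x. (\<chi> i. x i) \<bullet> b) \<in> borel_measurable (PiM UNIV (\<lambda>_::'m. (lborel::'a measure)))"
    by (simp add: b inner_axis)
qed

lemma lborel_vec_eq_distr_PiM:
  "(lborel :: ('a::euclidean_space^'m) measure) = distr (PiM UNIV (\<lambda>_. lborel)) borel (\<lambda>f. \<chi> i. f i)"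
proof (rule lborel_eqI)
  fix l u :: "'a^'m"
  assume le: "\<And>b. b \<in> Basis \<Longrightarrow> l \<bullet> b \<le> u \<bullet> b"
  have le_components: "\<And>i b. b \<in> Basis \<Longrightarrow> l$i \<bullet> b \<le> u$i \<bullet> b"
    using le by (metis axis_in_Basis_iff inner_axis)
  have preimage: "(\<lambda>f. \<chi> i. f i) -` box l u \<inter> space (PiM UNIV (\<lambda>_::'m. (lborel::'a measure)))
       = PiE UNIV (\<lambda>i. box (l$i) (u$i))"
    by (auto simp: mem_box Basis_vec_def inner_axis space_PiM PiE_def Pi_def extensional_def)
  interpret product_sigma_finite "\<lambda>_::'m. (lborel::'a measure)" by standard
  have "emeasure (distr (PiM UNIV (\<lambda>_. lborel)) borel (\<lambda>f. \<chi> i. f i)) (box l u)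
      = emeasure (PiM UNIV (\<lambda>_::'m. (lborel::'a measure))) (PiE UNIV (\<lambda>i. box (l$i) (u$i)))"
    by (subst emeasure_distr[OF vec_lambda_measurable]) (auto simp: preimage)
  also have "\<dots> = (\<Prod>i\<in>UNIV. emeasure lborel (box (l$i) (u$i)))"
    by (rule emeasure_PiM) auto
  also have "\<dots> = (\<Prod>i\<in>UNIV. ennreal (\<Prod>b\<in>Basis. (u$i - l$i) \<bullet> b))"
    using le_components by (subst emeasure_lborel_box) auto
  also have "\<dots> = ennreal (\<Prod>i\<in>UNIV. \<Prod>b\<in>Basis. (u$i - l$i) \<bullet> b)"
    using le_components by (intro prod_ennreal) (auto intro!: prod_nonneg simp: inner_diff_left)
  also have "(\<Prod>i\<in>UNIV. \<Prod>b\<in>Basis. (u$i - l$i) \<bullet> b) = (\<Prod>b\<in>Basis. (u - l) \<bullet> b)"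
  proof -
    have "(\<Prod>b\<in>Basis. (u - l) \<bullet> b) = (\<Prod>i\<in>UNIV. \<Prod>b\<in>(\<Union>v\<in>Basis. {axis i v}). (u - l) \<bullet> b)"
      unfolding Basis_vec_def by (rule prod.UNION_disjoint) (auto simp: axis_eq_axis)
    also have "\<dots> = (\<Prod>i\<in>UNIV. \<Prod>v\<in>Basis. (u - l) \<bullet> axis i v)"
      by (intro prod.cong refl, subst prod.UNION_disjoint) (auto simp: axis_eq_axis)
    finally show ?thesis by (simp add: inner_axis)
  qed
  finally show "emeasure (distr (PiM UNIV (\<lambda>_. lborel)) borel (\<lambda>f. \<chi> i. f i)) (box l u)
      = (\<Prod>b\<in>Basis. (u - l) \<bullet> b)" .
qed simp

lemma emeasure_lborel_insert:
  fixes S :: "'a::euclidean_space set"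
  assumes "S \<in> sets borel"
  shows "emeasure lborel (insert x S) = emeasure lborel S"
proof -
  have "{x} \<in> null_sets lborel" by (simp add: null_sets_def)
  then have "emeasure lborel (S \<union> {x}) = emeasure lborel S"
    using assms by (intro emeasure_Un_null_set) simp_all
  then show ?thesis by simp
qed

lemma sets_borel_vec_all_in:
  fixes A :: "'a::euclidean_space set"
  assumes "A \<in> sets borel"
  shows "{y::'a^'m. \<forall>i. y$i \<in> A} \<in> sets borel"
proof -
  have "{y::'a^'m. \<forall>i. y$i \<in> A} = (\<Inter>i. (\<lambda>y. y$i) -` A)" by auto
  also have "\<dots> \<in> sets borel"
    by (intro sets.countable_INT)
      (auto intro!: measurable_sets_borel[OF _ assms] borel_measurable_continuous_onI continuous_intros)
  finally show ?thesis .
qed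

lemma emeasure_lborel_vec_all_in:
  fixes A :: "'a::euclidean_space set"
  assumes "A \<in> sets borel"
  shows "emeasure lborel {y::'a^'m. \<forall>i. y$i \<in> A} = emeasure lborel A ^ CARD('m)"
proof -
  interpret product_sigma_finite "\<lambda>_::'m. (lborel::'a measure)" by standard
  have preimage: "(\<lambda>f. \<chi> i. f i) -` {y::'a^'m. \<forall>i. y$i \<in> A} \<inter> space (PiM UNIV (\<lambda>_::'m. (lborel::'a measure)))
       = PiE UNIV (\<lambda>i. A)"
    by (auto simp: space_PiM PiE_def Pi_def extensional_def)
  have "emeasure lborel {y::'a^'m. \<forall>i. y$i \<in> A}
      = emeasure (PiM UNIV (\<lambda>_::'m. (lborel::'a measure))) (PiE UNIV (\<lambda>i. A))"
    by (subst lborel_vec_eq_distr_PiM,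
        subst emeasure_distr[OF vec_lambda_measurable sets_borel_vec_all_in[OF assms]])
      (simp only: preimage)
  also have "\<dots> = (\<Prod>i\<in>(UNIV::'m set). emeasure lborel A)"
    using emeasure_PiM[of UNIV "\<lambda>_. A"] assms by simp
  finally show ?thesis by simp
qed

lemma emeasure_lborel_vec_all_in_reflected:
  fixes A :: "'a::euclidean_space set"
  assumes "A \<in> sets borel"
  shows "emeasure lborel {y::'a^'m. \<forall>i. x - y$i \<in> A} = emeasure lborel A ^ CARD('m)"
proof -
  define c :: "'a^'m" where "c = (\<chi> i. x)"
  define P where "P = {y::'a^'m. \<forall>i. y$i \<in> A}"
  have P: "P \<in> sets borel" unfolding P_def by (rule sets_borel_vec_all_in[OF assms])
  have reflect: "(\<lambda>z. c + (-1) *\<^sub>R z) -` P = {y. \<forall>i. x - y$i \<in> A}"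
    by (auto simp: P_def c_def)
  have "emeasure lborel P
      = emeasure (density (distr lborel borel (\<lambda>z. c + (-1) *\<^sub>R z)) (\<lambda>_. \<bar>-1::real\<bar> ^ DIM('a^'m))) P"
    by (subst lborel_affine[of "-1" c, symmetric]) auto
  also have "\<dots> = emeasure lborel ((\<lambda>z. c + (-1) *\<^sub>R z) -` P)"
    using P by (simp add: density_1 emeasure_distr)
  finally have "emeasure lborel P = emeasure lborel {y::'a^'m. \<forall>i. x - y$i \<in> A}"
    by (simp only: reflect)
  then show ?thesis
    using emeasure_lborel_vec_all_in[OF assms, where 'm='m] by (simp add: P_def)
qed

lemma radial_fun_translate_eq:
  "radial_fun ((\<lambda>z. z - x) ` K) u =
     (if {t. t > 0 \<and> x + t *\<^sub>R u \<in> K} = {} then 0 else Sup {t. t > 0 \<and> x + t *\<^sub>R u \<in> K})"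
proof -
  have "t *\<^sub>R u \<in> (\<lambda>z. z - x) ` K \<longleftrightarrow> x + t *\<^sub>R u \<in> K" for t
    by (auto simp: image_iff) (metis add_diff_cancel_left')
  then have "{t. t > 0 \<and> t *\<^sub>R u \<in> (\<lambda>z. z - x) ` K} = {t. t > 0 \<and> x + t *\<^sub>R u \<in> K}" by simp
  then show ?thesis unfolding radial_fun_def by (simp only:)
qed

lemma bdd_above_ray:
  fixes K :: "'a::real_normed_vector set"
  assumes "bounded K" "u \<noteq> 0"
  shows "bdd_above {t. x + t *\<^sub>R u \<in> K}"
proof -
  obtain B where B: "\<And>y. y \<in> K \<Longrightarrow> norm y \<le> B"
    using assms(1) by (auto simp: bounded_iff)
  have "t \<le> (B + norm x) / norm u" if "x + t *\<^sub>R u \<in> K" for t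
  proof -
    have "t * norm u \<le> norm ((x + t *\<^sub>R u) - x)" by (simp add: mult_right_mono)
    also have "\<dots> \<le> B + norm x" using norm_triangle_ineq4[of "x + t *\<^sub>R u" x] B[OF that] by simp
    finally show ?thesis using assms(2) by (simp add: field_simps)
  qed
  then show ?thesis by (auto simp: bdd_above_def)
qed

lemma radial_fun_translate:
  fixes K :: "'a::euclidean_space set"
  assumes "compact K" "convex K" "x \<in> K" "u \<noteq> 0"
  shows "0 \<le> radial_fun ((\<lambda>z. z - x) ` K) u"
    and "\<And>t. 0 < t \<Longrightarrow> x + t *\<^sub>R u \<in> K \<longleftrightarrow> t \<le> radial_fun ((\<lambda>z. z - x) ` K) u"
proof -
  define S where "S = {t. t > 0 \<and> x + t *\<^sub>R u \<in> K}"
  have \<rho>: "radial_fun ((\<lambda>z. z - x) ` K) u = (if S = {} then 0 else Sup S)"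
    unfolding S_def by (rule radial_fun_translate_eq)
  have bdd: "bdd_above S"
    using bdd_above_ray[OF compact_imp_bounded[OF assms(1)] assms(4), of x]
    by (auto simp: S_def intro: bdd_above_mono)
  show "0 \<le> radial_fun ((\<lambda>z. z - x) ` K) u"
    using bdd by (auto simp: \<rho> S_def intro: less_imp_le order.strict_trans2[OF _ cSup_upper])
  fix t :: real assume t: "0 < t"
  show "x + t *\<^sub>R u \<in> K \<longleftrightarrow> t \<le> radial_fun ((\<lambda>z. z - x) ` K) u"
  proof (cases "S = {}")
    case True
    then show ?thesis using t by (auto simp: \<rho> S_def)
  next
    case False
    have "closed ((\<lambda>t. x + t *\<^sub>R u) -` K)"
      by (intro closed_vimage compact_imp_closed[OF assms(1)] continuous_intros)
    then have "closure S \<subseteq> {t. x + t *\<^sub>R u \<in> K}"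
      by (intro closure_minimal) (auto simp: S_def vimage_def)
    then have Sup_mem: "x + Sup S *\<^sub>R u \<in> K"
      using closure_contains_Sup[OF False bdd] by blast
    have "x + t *\<^sub>R u \<in> K" if le: "t \<le> Sup S"
    proof -
      define a where "a = t / Sup S"
      have a: "0 \<le> a" "a \<le> 1" "a * Sup S = t" using t le by (auto simp: a_def)
      have "(1 - a) *\<^sub>R x + a *\<^sub>R (x + Sup S *\<^sub>R u) \<in> K"
        using a Sup_mem assms(2,3) by (intro convexD_alt) auto
      then show ?thesis using a(3) by (simp add: algebra_simps)
    qed
    moreover have "t \<le> Sup S" if "x + t *\<^sub>R u \<in> K"
      using that t bdd by (auto simp: S_def intro!: cSup_upper)
    ultimately show ?thesis using False by (auto simp: \<rho>)
  qed
qed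

lemma radial_fun_translate_le:
  fixes K :: "'a::euclidean_space set"
  assumes K: "compact K" "convex K" "x \<in> K" and u: "u \<noteq> 0"
    and B: "\<And>y. y \<in> K \<Longrightarrow> norm y \<le> B"
  shows "radial_fun ((\<lambda>z. z - x) ` K) u \<le> 2 * B / norm u"
proof -
  define \<rho> where "\<rho> = radial_fun ((\<lambda>z. z - x) ` K) u"
  have "0 \<le> B" using B[OF K(3)] by (meson norm_ge_zero order_trans)
  moreover have "\<rho> \<le> 2 * B / norm u" if pos: "\<rho> > 0"
  proof -
    have mem: "x + \<rho> *\<^sub>R u \<in> K" using radial_fun_translate(2)[OF K u pos] by (simp add: \<rho>_def)
    have "\<rho> * norm u = norm ((x + \<rho> *\<^sub>R u) - x)" using pos by simp
    also have "\<dots> \<le> 2 * B"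
      using norm_triangle_ineq4[of "x + \<rho> *\<^sub>R u" x] B[OF mem] B[OF K(3)] by simp
    finally show ?thesis using u by (simp add: field_simps)
  qed
  ultimately show ?thesis using radial_fun_translate(1)[OF K u] by (fastforce simp: \<rho>_def)
qed

lemma radial_fun_translate_scaleR:
  fixes K :: "'a::euclidean_space set"
  assumes K: "compact K" "convex K" "x \<in> K" and u: "u \<noteq> 0" and s: "s > 0"
  shows "radial_fun ((\<lambda>z. z - x) ` K) (s *\<^sub>R u) = radial_fun ((\<lambda>z. z - x) ` K) u / s"
proof -
  have su: "s *\<^sub>R u \<noteq> 0" using u s by simp
  have "t \<le> radial_fun ((\<lambda>z. z - x) ` K) (s *\<^sub>R u) \<longleftrightarrow> t \<le> radial_fun ((\<lambda>z. z - x) ` K) u / s"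
    if t: "t > 0" for t
    using radial_fun_translate(2)[OF K su t] radial_fun_translate(2)[OF K u, of "t * s"] t s
    by (simp add: mult.commute pos_le_divide_eq)
  moreover have "0 \<le> radial_fun ((\<lambda>z. z - x) ` K) (s *\<^sub>R u)"
    "0 \<le> radial_fun ((\<lambda>z. z - x) ` K) u / s"
    using radial_fun_translate(1)[OF K su] radial_fun_translate(1)[OF K u] s by simp_all
  ultimately show ?thesis
    by (metis dual_order.refl linorder_neqE_linordered_idom not_le)
qed

text \<open>A countable supremum, so that the radial functions of the translates \<open>K - x\<close> become jointly
  Borel measurable in \<open>x\<close> and the direction (cf. \<open>ray_sup_eq_radial_fun\<close>).\<close>
definition ray_sup :: "'a::real_vector set \<Rightarrow> 'a \<Rightarrow> 'a \<Rightarrow> ennreal" where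
  "ray_sup K x u = (SUP q\<in>{q\<in>\<rat>. 0 < q}. if x + q *\<^sub>R u \<in> K then ennreal q else 0)"

lemma ray_sup_eq_radial_fun:
  fixes K :: "'a::euclidean_space set"
  assumes "compact K" "convex K" "x \<in> K" "u \<noteq> 0"
  shows "ray_sup K x u = ennreal (radial_fun ((\<lambda>z. z - x) ` K) u)"
proof -
  define \<rho> where "\<rho> = radial_fun ((\<lambda>z. z - x) ` K) u"
  have "ray_sup K x u = (SUP q\<in>{q\<in>\<rat>. 0 < q}. if q \<le> \<rho> then ennreal q else 0)"
    unfolding ray_sup_def using radial_fun_translate(2)[OF assms]
    by (intro SUP_cong) (auto simp: \<rho>_def)
  also have "\<dots> = ennreal \<rho>"
  proof (rule antisym)
    show "(SUP q\<in>{q\<in>\<rat>. 0 < q}. if q \<le> \<rho> then ennreal q else 0) \<le> ennreal \<rho>"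
      by (rule SUP_least) (auto intro: ennreal_leI)
    show "ennreal \<rho> \<le> (SUP q\<in>{q\<in>\<rat>. 0 < q}. if q \<le> \<rho> then ennreal q else 0)"
    proof (subst le_SUP_iff, intro allI impI)
      fix y assume "y < ennreal \<rho>"
      then obtain c where c: "y = ennreal c" "0 \<le> c" "c < \<rho>"
        by (metis ennreal_cases ennreal_less_iff ennreal_less_top ennreal_neg less_le_not_le
            less_trans linorder_not_le not_top_less)
      obtain q where q: "q \<in> \<rat>" "c < q" "q < \<rho>" using Rats_dense_in_real[OF c(3)] by blast
      show "\<exists>i\<in>{q \<in> \<rat>. 0 < q}. y < (if i \<le> \<rho> then ennreal i else 0)"
        using q c by (intro bexI[of _ q]) (auto intro!: ennreal_lessI)
    qed
  qed
  finally show ?thesis by (simp add: \<rho>_def)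
qed

lemma borel_measurable_ray_sup:
  fixes K :: "'a::euclidean_space set"
  assumes "closed K"
  shows "(\<lambda>p. ray_sup K (fst p) (snd p)) \<in> borel_measurable (borel :: ('a \<times> 'a) measure)"
  unfolding ray_sup_def
proof (rule borel_measurable_SUP)
  show "countable {q\<in>\<rat>. 0 < (q::real)}"
    using countable_rat by (rule countable_subset[rotated]) auto
  fix q :: real
  have "closed ((\<lambda>p::'a\<times>'a. fst p + q *\<^sub>R snd p) -` K)"
    by (intro closed_vimage assms continuous_intros)
  then have "{p::'a\<times>'a. fst p + q *\<^sub>R snd p \<in> K} \<in> sets borel"
    by (simp add: vimage_def borel_closed)
  then show "(\<lambda>p::'a\<times>'a. if fst p + q *\<^sub>R snd p \<in> K then ennreal q else 0) \<in> borel_measurable borel"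
    by (intro measurable_If) auto
qed

lemma emeasure_lborel_Ioi_top: "emeasure lborel {0::real<..} = \<infinity>"
proof -
  have "of_nat n \<le> emeasure lborel {0::real<..}" for n
  proof -
    have "of_nat n = emeasure lborel {0<..real n}" by (simp add: ennreal_of_nat_eq_real_of_nat)
    also have "\<dots> \<le> emeasure lborel {0::real<..}" by (rule emeasure_mono) auto
    finally show ?thesis .
  qed
  then have "(SUP n. of_nat n :: ennreal) \<le> emeasure lborel {0::real<..}"
    by (rule SUP_least)
  then show ?thesis by (simp add: ennreal_SUP_of_nat_eq_top top_unique)
qed

lemma ennreal_eq_nn_integral_layer:
  fixes a :: ennreal
  shows "a = (\<integral>\<^sup>+t. (if 0 < t \<and> ennreal t \<le> a then 1 else 0) \<partial>lborel)"
proof (cases a)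
  case (real r)
  then have "(\<lambda>t. if 0 < t \<and> ennreal t \<le> a then 1 else 0) = (indicator {0<..r} :: real \<Rightarrow> ennreal)"
    by (auto simp: ennreal_le_iff indicator_def)
  then show ?thesis using real by simp
next
  case top
  then have "(\<lambda>t. if 0 < t \<and> ennreal t \<le> a then 1 else 0) = (indicator {0<..} :: real \<Rightarrow> ennreal)"
    by (auto simp: indicator_def)
  then show ?thesis using top by (simp add: emeasure_lborel_Ioi_top)
qed

lemma nn_integral_lborel_scaleR:
  fixes g :: "'a::euclidean_space \<Rightarrow> ennreal"
  assumes c: "c > 0" and g[measurable]: "g \<in> borel_measurable borel"
  shows "(\<integral>\<^sup>+y. g y \<partial>lborel) = ennreal (c ^ DIM('a)) * (\<integral>\<^sup>+z. g (c *\<^sub>R z) \<partial>lborel)"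
proof -
  have "(\<integral>\<^sup>+y. g y \<partial>lborel)
      = (\<integral>\<^sup>+y. g y \<partial>(density (distr lborel borel (\<lambda>x. 0 + c *\<^sub>R x)) (\<lambda>_. \<bar>c\<bar> ^ DIM('a))))"
    using c by (subst lborel_affine[of c 0]) auto
  also have "\<dots> = (\<integral>\<^sup>+z. ennreal (c ^ DIM('a)) * g (c *\<^sub>R z) \<partial>lborel)"
    using c by (subst nn_integral_density; simp add: nn_integral_distr)
  also have "\<dots> = ennreal (c ^ DIM('a)) * (\<integral>\<^sup>+z. g (c *\<^sub>R z) \<partial>lborel)"
    by (rule nn_integral_cmult) simp
  finally show ?thesis .
qed

lemma nn_integral_inverse_window:
  fixes a :: real
  assumes a: "a > 0"
  shows "(\<integral>\<^sup>+t. (if 0 < t then ennreal (1 / t) else 0) * (if t \<le> a \<and> a \<le> exp 1 * t then 1 else 0) \<partial>lborel) = 1"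
proof -
  have pos: "a / exp 1 > 0" using a by simp
  have "((\<lambda>t. 1 / t) has_integral (ln a - ln (a / exp 1))) {a / exp 1 .. a}"
  proof (rule fundamental_theorem_of_calculus)
    show "a / exp 1 \<le> a" using a by (simp add: field_simps)
    fix t assume "t \<in> {a / exp 1 .. a}"
    then have "t > 0" using pos by auto
    then show "(ln has_vector_derivative 1 / t) (at t within {a / exp 1..a})"
      by (auto intro!: has_field_derivative_at_within DERIV_ln_divide
               simp: has_real_derivative_iff_has_vector_derivative[symmetric])
  qed
  moreover have "ln a - ln (a / exp 1) = 1" using a by (simp add: ln_div)
  ultimately have "((\<lambda>t. 1 / t) has_integral 1) {a / exp 1 .. a}" by simp
  then have "(\<integral>\<^sup>+t. ennreal (indicator {a / exp 1 .. a} t * (1 / t)) \<partial>lborel) = ennreal 1"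
    by (rule nn_integral_has_integral_lebesgue[rotated]) (use pos in auto)
  moreover have "(if 0 < t then ennreal (1 / t) else 0) * (if t \<le> a \<and> a \<le> exp 1 * t then 1 else 0)
      = ennreal (indicator {a / exp 1 .. a} t * (1 / t))" for t
  proof -
    have "a \<le> exp 1 * t \<Longrightarrow> 0 < t" using a zero_less_mult_pos[of "exp 1" t] by simp
    moreover have "a \<le> exp 1 * t \<longleftrightarrow> a / exp 1 \<le> t" by (simp add: field_simps)
    ultimately show ?thesis by (auto simp: indicator_def)
  qed
  ultimately show ?thesis by simp
qed

text \<open>On this shell the radial variable \<open>t = |y|^d\<close> ranges over \<open>[1, e]\<close>, where
  \<open>dt / t\<close> has total mass \<open>1\<close>.\<close>
definition log_shell :: "'a::euclidean_space set" where
  "log_shell = {y. 1 \<le> norm y ^ DIM('a) \<and> norm y ^ DIM('a) \<le> exp 1}"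

lemma log_shell_borel[measurable]: "log_shell \<in> sets borel"
  unfolding log_shell_def by measurable

lemma nn_integral_homogeneous_layer_in_log_shell:
  fixes \<phi> :: "'a::euclidean_space \<Rightarrow> ennreal"
  assumes [measurable]: "\<phi> \<in> borel_measurable borel"
    and hom: "\<And>s y. s > 0 \<Longrightarrow> y \<noteq> 0 \<Longrightarrow> \<phi> y = ennreal (s ^ DIM('a)) * \<phi> (s *\<^sub>R y)"
  shows "(\<integral>\<^sup>+y. (if 0 < t \<and> ennreal t \<le> \<phi> y then 1 else 0) * indicator log_shell y \<partial>lborel)
    = (\<integral>\<^sup>+z. (if 0 < t then ennreal (1 / t) else 0) * indicator {z. z \<noteq> 0 \<and> 1 \<le> \<phi> z} z *
        (if t \<le> norm z ^ DIM('a) \<and> norm z ^ DIM('a) \<le> exp 1 * t then 1 else 0) \<partial>lborel)"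
proof (cases "t > 0")
  case t: True
  define s where "s = root DIM('a) (1 / t)"
  have s: "s > 0" "s ^ DIM('a) = 1 / t" using t by (auto simp: s_def real_root_pow_pos2)
  have layer: "(if ennreal t \<le> \<phi> (s *\<^sub>R z) then 1 else 0) * indicator log_shell (s *\<^sub>R z)
      = indicator {z. z \<noteq> 0 \<and> 1 \<le> \<phi> z} z *
        (if t \<le> norm z ^ DIM('a) \<and> norm z ^ DIM('a) \<le> exp 1 * t then (1::ennreal) else 0)" for z
  proof (cases "z = 0")
    case True then show ?thesis by (simp add: log_shell_def power_0_left)
  next
    case False
    have "\<phi> (s *\<^sub>R z) = ennreal t * (ennreal (1 / t) * \<phi> (s *\<^sub>R z))"
      using t by (simp add: mult.assoc[symmetric] ennreal_mult[symmetric])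
    also have "\<dots> = ennreal t * \<phi> z" using hom[OF s(1) False] s(2) by simp
    finally have "ennreal t \<le> \<phi> (s *\<^sub>R z) \<longleftrightarrow> ennreal t * 1 \<le> ennreal t * \<phi> z" by simp
    also have "\<dots> \<longleftrightarrow> 1 \<le> \<phi> z" using t by (subst ennreal_mult_le_mult_iff) auto
    finally have "ennreal t \<le> \<phi> (s *\<^sub>R z) \<longleftrightarrow> 1 \<le> \<phi> z" .
    moreover have "s *\<^sub>R z \<in> log_shell \<longleftrightarrow> t \<le> norm z ^ DIM('a) \<and> norm z ^ DIM('a) \<le> exp 1 * t"
    proof -
      have n: "norm (s *\<^sub>R z) ^ DIM('a) = norm z ^ DIM('a) / t"
        using s by (simp add: power_mult_distrib)
      show ?thesis unfolding log_shell_def mem_Collect_eq n using t by (simp add: field_simps)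
    qed
    ultimately show ?thesis using False by (simp add: indicator_def)
  qed
  have "(\<integral>\<^sup>+y. (if ennreal t \<le> \<phi> y then 1 else 0) * indicator log_shell y \<partial>lborel)
      = ennreal (1 / t) * (\<integral>\<^sup>+z. indicator {z. z \<noteq> 0 \<and> 1 \<le> \<phi> z} z *
        (if t \<le> norm z ^ DIM('a) \<and> norm z ^ DIM('a) \<le> exp 1 * t then 1 else 0) \<partial>lborel)"
    by (subst nn_integral_lborel_scaleR[OF s(1)]) (simp_all add: s(2) layer)
  also have "\<dots> = (\<integral>\<^sup>+z. ennreal (1 / t) * (indicator {z. z \<noteq> 0 \<and> 1 \<le> \<phi> z} z *
        (if t \<le> norm z ^ DIM('a) \<and> norm z ^ DIM('a) \<le> exp 1 * t then 1 else 0)) \<partial>lborel)"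
    by (rule nn_integral_cmult[symmetric]) measurable
  finally show ?thesis using t by (simp only: if_True simp_thms mult.assoc)
qed simp

text \<open>A function homogeneous of degree \<open>-d\<close> integrates over the shell to the volume of its
  superlevel set at \<open>1\<close>: write \<open>\<phi>\<close> as the integral of its layers, scale each layer to level
  \<open>1\<close>, and integrate \<open>dt / t\<close> over the window \<open>t \<le> |z|^d \<le> e t\<close>.\<close>
lemma nn_integral_homogeneous_log_shell:
  fixes \<phi> :: "'a::euclidean_space \<Rightarrow> ennreal"
  assumes meas[measurable]: "\<phi> \<in> borel_measurable borel"
    and hom: "\<And>s y. s > 0 \<Longrightarrow> y \<noteq> 0 \<Longrightarrow> \<phi> y = ennreal (s ^ DIM('a)) * \<phi> (s *\<^sub>R y)"
  shows "(\<integral>\<^sup>+y. \<phi> y * indicator log_shell y \<partial>lborel) = emeasure lborel {y. 1 \<le> \<phi> y}"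
proof -
  define D where "D = DIM('a)"
  define L where "L = {y::'a. y \<noteq> 0 \<and> 1 \<le> \<phi> y}"
  have [measurable]: "L \<in> sets borel" unfolding L_def by measurable
  have "(\<integral>\<^sup>+y. \<phi> y * indicator log_shell y \<partial>lborel)
      = (\<integral>\<^sup>+y. (\<integral>\<^sup>+t. (if 0 < t \<and> ennreal t \<le> \<phi> y then 1 else 0) * indicator log_shell y \<partial>lborel) \<partial>lborel)"
    by (subst ennreal_eq_nn_integral_layer) (simp add: nn_integral_multc)
  also have "\<dots> = (\<integral>\<^sup>+t. (\<integral>\<^sup>+y. (if 0 < t \<and> ennreal t \<le> \<phi> y then 1 else 0) * indicator log_shell y \<partial>lborel) \<partial>lborel)"
    by (rule lborel_pair.Fubini'[symmetric]) (unfold case_prod_beta', measurable)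
  also have "\<dots> = (\<integral>\<^sup>+t. (\<integral>\<^sup>+z. (if 0 < t then ennreal (1 / t) else 0) * indicator L z *
         (if t \<le> norm z ^ D \<and> norm z ^ D \<le> exp 1 * t then 1 else 0) \<partial>lborel) \<partial>lborel)"
    unfolding L_def D_def by (intro nn_integral_cong nn_integral_homogeneous_layer_in_log_shell[OF meas hom])
  also have "\<dots> = (\<integral>\<^sup>+z. (\<integral>\<^sup>+t. (if 0 < t then ennreal (1 / t) else 0) * indicator L z *
         (if t \<le> norm z ^ D \<and> norm z ^ D \<le> exp 1 * t then 1 else 0) \<partial>lborel) \<partial>lborel)"
    by (rule lborel_pair.Fubini') (unfold case_prod_beta', measurable)
  also have "\<dots> = (\<integral>\<^sup>+z. indicator L z \<partial>lborel)"
  proof (rule nn_integral_cong)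
    fix z :: 'a
    have "z \<in> L \<Longrightarrow> norm z ^ D > 0" by (simp add: L_def)
    then show "(\<integral>\<^sup>+t. (if 0 < t then ennreal (1 / t) else 0) * indicator L z *
         (if t \<le> norm z ^ D \<and> norm z ^ D \<le> exp 1 * t then 1 else 0) \<partial>lborel) = indicator L z"
      using nn_integral_inverse_window[of "norm z ^ D"]
      by (cases "z \<in> L") (simp_all add: mult.commute mult.left_commute)
  qed
  also have "\<dots> = emeasure lborel L" by simp
  also have "\<dots> = emeasure lborel ({y. 1 \<le> \<phi> y} - {0})"
    by (simp add: L_def set_diff_eq conj_commute)
  also have "\<dots> = emeasure lborel {y. 1 \<le> \<phi> y}"
    by (rule emeasure_Diff_null_set) (auto simp: null_sets_def)
  finally show ?thesis .
qed

lemma INF_mult_left_ennreal: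
  fixes g :: "'i::finite \<Rightarrow> ennreal"
  shows "(INF i. c * g i) = c * (INF i. g i)"
proof (rule antisym)
  have "Min (range g) \<in> range g" by (rule Min_in) auto
  then obtain i0 where "Min (range g) = g i0" by blast
  moreover have "Inf (range g) = Min (range g)" by (rule Min_Inf[symmetric]) auto
  ultimately have i0: "(INF i. g i) = g i0" by simp
  show "(INF i. c * g i) \<le> c * (INF i. g i)" unfolding i0 by (rule INF_lower) simp
  show "c * (INF i. g i) \<le> (INF i. c * g i)"
    by (rule INF_greatest) (auto intro!: mult_left_mono INF_lower)
qed

lemma ennreal_one_le_power_iff:
  fixes B :: ennreal
  assumes "d > 0"
  shows "1 \<le> B ^ d \<longleftrightarrow> 1 \<le> B"
  by (metis assms less_one linorder_linear linorder_not_le one_le_power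
      order_le_neq_trans power_decreasing power_le_one power_one_right zero_le)

text \<open>For \<open>x \<in> K\<close> and \<open>y \<noteq> 0\<close> this is the integrand \<open>(min_i \<rho>_{K-x}(-y_i))^(nm)\<close> of \<open>rho_Rmp\<close>
  (see \<open>Rmp_integrand_eq_Min_powr\<close>), made ennreal-valued and jointly measurable via \<open>ray_sup\<close>.\<close>
definition Rmp_integrand :: "(real^'n) set \<Rightarrow> real^'n \<Rightarrow> real^'n^'m \<Rightarrow> ennreal" where
  "Rmp_integrand K x y =
     (INF i. if y$i = 0 then \<infinity> else ray_sup K x (- (y$i))) ^ (CARD('n) * CARD('m))"

lemma borel_measurable_Rmp_integrand:
  fixes f :: "'c::euclidean_space \<Rightarrow> real^'n" and g :: "'c \<Rightarrow> real^'n^'m"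
  assumes K: "closed K" and f: "continuous_on UNIV f" and g: "continuous_on UNIV g"
  shows "(\<lambda>p. Rmp_integrand K (f p) (g p)) \<in> borel_measurable borel"
proof -
  have "(\<lambda>p. if g p $ i = 0 then \<infinity> else ray_sup K (f p) (- (g p $ i))) \<in> borel_measurable borel"
    for i
  proof (rule measurable_If)
    have "(\<lambda>p. (f p, - (g p $ i))) \<in> borel_measurable borel"
      by (intro borel_measurable_continuous_onI continuous_intros f g)
    from measurable_compose[OF this borel_measurable_ray_sup[OF K]]
    show "(\<lambda>p. ray_sup K (f p) (- (g p $ i))) \<in> borel_measurable borel" by simp
    have "closed ((\<lambda>p. g p $ i) -` {0})"
      by (intro closed_vimage closed_singleton)
        (auto intro!: continuous_intros continuous_on_imp_continuous_within[OF g]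
          simp: continuous_on_eq_continuous_at)
    then show "{p \<in> space borel. g p $ i = 0} \<in> sets borel" by (simp add: vimage_def borel_closed)
  qed simp
  then have "(\<lambda>p. INF i. if g p $ i = 0 then \<infinity> else ray_sup K (f p) (- (g p $ i)))
      \<in> borel_measurable borel"
    by (rule borel_measurable_INF[rotated]) simp
  then show ?thesis unfolding Rmp_integrand_def by (rule borel_measurable_power_ennreal)
qed

lemma Rmp_integrand_scaleR:
  fixes K :: "(real^'n) set" and y :: "real^'n^'m"
  assumes K: "compact K" "convex K" "x \<in> K" and s: "s > 0"
  shows "Rmp_integrand K x y = ennreal (s ^ (CARD('n) * CARD('m))) * Rmp_integrand K x (s *\<^sub>R y)"
proof -
  have "(if y$i = 0 then \<infinity> else ray_sup K x (- (y$i)))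
      = ennreal s * (if (s *\<^sub>R y)$i = 0 then \<infinity> else ray_sup K x (- ((s *\<^sub>R y)$i)))" for i
  proof (cases "y$i = 0")
    case True then show ?thesis using s by (simp add: ennreal_mult_top)
  next
    case False
    then have ne: "- (y$i) \<noteq> 0" by simp
    have "ennreal s * ray_sup K x (- ((s *\<^sub>R y)$i))
        = ennreal s * ennreal (radial_fun ((\<lambda>z. z - x) ` K) (- (y$i)) / s)"
      using ray_sup_eq_radial_fun[OF K, of "s *\<^sub>R (- (y$i))"] radial_fun_translate_scaleR[OF K ne s]
        s False by simp
    also have "\<dots> = ray_sup K x (- (y$i))"
      using s radial_fun_translate(1)[OF K ne] ray_sup_eq_radial_fun[OF K ne]
      by (simp add: ennreal_mult[symmetric])
    finally show ?thesis using False s by simp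
  qed
  then show ?thesis
    unfolding Rmp_integrand_def using s
    by (simp add: INF_mult_left_ennreal power_mult_distrib ennreal_power)
qed

lemma one_le_Rmp_integrand_iff:
  fixes K :: "(real^'n) set" and y :: "real^'n^'m"
  assumes K: "compact K" "convex K" "x \<in> K"
  shows "1 \<le> Rmp_integrand K x y \<longleftrightarrow> (\<forall>i. x - y$i \<in> K)"
proof -
  have "1 \<le> (if y$i = 0 then \<infinity> else ray_sup K x (- (y$i))) \<longleftrightarrow> x - y$i \<in> K" for i
  proof (cases "y$i = 0")
    case True then show ?thesis using K by simp
  next
    case False
    then have ne: "- (y$i) \<noteq> 0" by simp
    have "1 \<le> ray_sup K x (- (y$i)) \<longleftrightarrow> 1 \<le> radial_fun ((\<lambda>z. z - x) ` K) (- (y$i))"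
      unfolding ray_sup_eq_radial_fun[OF K ne]
      using ennreal_le_iff[OF radial_fun_translate(1)[OF K ne], of 1] by simp
    also have "\<dots> \<longleftrightarrow> x - y$i \<in> K" using radial_fun_translate(2)[OF K ne, of 1] by simp
    finally show ?thesis using False by simp
  qed
  moreover have d: "CARD('n) * CARD('m) > 0" by simp
  ultimately show ?thesis
    unfolding Rmp_integrand_def ennreal_one_le_power_iff[OF d] le_INF_iff by simp
qed

lemma Rmp_integrand_le:
  fixes K :: "(real^'n) set" and \<theta> :: "real^'n^'m"
  assumes K: "compact K" "convex K" "x \<in> K" and i0: "\<theta> $ i0 \<noteq> 0"
    and B: "\<And>y. y \<in> K \<Longrightarrow> norm y \<le> B"
  shows "Rmp_integrand K x \<theta> \<le> ennreal ((2 * B / norm (\<theta> $ i0)) ^ (CARD('n) * CARD('m)))"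
proof -
  have ne: "- (\<theta> $ i0) \<noteq> 0" using i0 by simp
  have "(INF i. if \<theta>$i = 0 then \<infinity> else ray_sup K x (- (\<theta>$i)))
      \<le> (if \<theta>$i0 = 0 then \<infinity> else ray_sup K x (- (\<theta>$i0)))"
    by (rule INF_lower) simp
  also have "\<dots> \<le> ennreal (2 * B / norm (\<theta> $ i0))"
    using i0 ray_sup_eq_radial_fun[OF K ne] radial_fun_translate_le[OF K ne B]
    by (simp add: ennreal_leI)
  finally have "Rmp_integrand K x \<theta> \<le> ennreal (2 * B / norm (\<theta> $ i0)) ^ (CARD('n) * CARD('m))"
    unfolding Rmp_integrand_def by (rule power_mono) simp
  moreover have "0 \<le> B" using B[OF K(3)] by (meson norm_ge_zero order_trans)
  ultimately show ?thesis by (simp add: ennreal_power)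
qed

lemma Rmp_integrand_eq_Min_powr:
  fixes K :: "(real^'n) set" and \<theta> :: "real^'n^'m"
  assumes K: "compact K" "convex K" "x \<in> K" and \<theta>: "\<theta> \<noteq> 0"
  shows "Rmp_integrand K x \<theta> = ennreal ((Min ((\<lambda>i. radial_fun ((\<lambda>z. z - x) ` K) (- (\<theta> $ i)))
            ` {i. \<theta> $ i \<noteq> 0})) powr real (CARD('n) * CARD('m)))"
proof -
  define A where "A = {i. \<theta> $ i \<noteq> 0}"
  define f where "f i = radial_fun ((\<lambda>z. z - x) ` K) (- (\<theta> $ i))" for i
  define d where "d = CARD('n) * CARD('m)"
  have "A \<noteq> {}" using \<theta> by (auto simp: A_def vec_eq_iff)
  then have fA: "finite (f ` A)" "f ` A \<noteq> {}" by auto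
  have f_nonneg: "0 \<le> f i" if "i \<in> A" for i
    using radial_fun_translate(1)[OF K, of "- (\<theta> $ i)"] that by (simp add: f_def A_def)
  have ray_sup_f: "ray_sup K x (- (\<theta> $ i)) = ennreal (f i)" if "i \<in> A" for i
    using ray_sup_eq_radial_fun[OF K, of "- (\<theta> $ i)"] that by (simp add: f_def A_def)
  obtain i0 where i0: "i0 \<in> A" "Min (f ` A) = f i0" using Min_in[OF fA] by auto
  have "(INF i. if \<theta>$i = 0 then \<infinity> else ray_sup K x (- (\<theta>$i))) = ennreal (Min (f ` A))"
  proof (rule antisym)
    have "(INF i. if \<theta>$i = 0 then \<infinity> else ray_sup K x (- (\<theta>$i)))
        \<le> (if \<theta>$i0 = 0 then \<infinity> else ray_sup K x (- (\<theta>$i0)))"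
      by (rule INF_lower) simp
    then show "(INF i. if \<theta>$i = 0 then \<infinity> else ray_sup K x (- (\<theta>$i))) \<le> ennreal (Min (f ` A))"
      using i0 ray_sup_f[OF i0(1)] by (simp add: A_def)
    have "ennreal (Min (f ` A)) \<le> ray_sup K x (- (\<theta>$i))" if "i \<in> A" for i
      using fA that ray_sup_f[OF that] by (auto intro: ennreal_leI)
    then show "ennreal (Min (f ` A)) \<le> (INF i. if \<theta>$i = 0 then \<infinity> else ray_sup K x (- (\<theta>$i)))"
      by (intro INF_greatest) (simp add: A_def)
  qed
  moreover have Min_nonneg: "0 \<le> Min (f ` A)" using i0 f_nonneg by simp
  moreover have "Min (f ` A) powr real d = Min (f ` A) ^ d"
  proof (cases "Min (f ` A) = 0")
    case False then show ?thesis using Min_nonneg by (intro powr_realpow) simp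
  qed (simp add: d_def)
  ultimately show ?thesis
    unfolding Rmp_integrand_def A_def[symmetric] f_def[symmetric] d_def[symmetric]
    by (simp add: ennreal_power)
qed

lemma DIM_vec_vec: "DIM(real^'n^'m) = CARD('n) * CARD('m)"
  by simp

lemma borel_measurable_Rmp_integrand_pair:
  fixes K :: "(real^'n) set"
  assumes "closed K"
  shows "(\<lambda>p. Rmp_integrand K (fst p) (snd p))
           \<in> borel_measurable (lborel \<Otimes>\<^sub>M (lborel :: (real^'n^'m) measure))"
    and "(\<lambda>p. Rmp_integrand K (snd p) (fst p))
           \<in> borel_measurable ((lborel :: (real^'n^'m) measure) \<Otimes>\<^sub>M lborel)"
  using borel_measurable_Rmp_integrand[OF assms, of fst snd]
    borel_measurable_Rmp_integrand[OF assms, of snd fst]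
  by (simp_all add: lborel_prod continuous_on_fst continuous_on_snd continuous_on_id)

lemma borel_measurable_Rmp_integrand_sections:
  fixes K :: "(real^'n) set" and y :: "real^'n^'m"
  assumes "closed K"
  shows "(\<lambda>x. Rmp_integrand K x y) \<in> borel_measurable borel"
    and "Rmp_integrand K x \<in> borel_measurable (borel :: (real^'n^'m) measure)"
  using borel_measurable_Rmp_integrand[OF assms, of "\<lambda>x. x" "\<lambda>_. y"]
    borel_measurable_Rmp_integrand[OF assms, of "\<lambda>_. x" "\<lambda>y. y"]
  by (simp_all add: continuous_on_id continuous_on_const)

lemma nn_integral_Rmp_integrand_finite:
  fixes K :: "(real^'n) set" and \<theta> :: "real^'n^'m"
  assumes K: "compact K" "convex K" and \<theta>: "\<theta> \<noteq> 0"
  shows "(\<integral>\<^sup>+x. indicator K x * Rmp_integrand K x \<theta> \<partial>lborel) < \<infinity>"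
proof -
  obtain B where B: "\<And>y. y \<in> K \<Longrightarrow> norm y \<le> B"
    using compact_imp_bounded[OF K(1)] by (auto simp: bounded_iff)
  obtain i0 where i0: "\<theta> $ i0 \<noteq> 0" using \<theta> by (auto simp: vec_eq_iff)
  define C where "C = (2 * B / norm (\<theta> $ i0)) ^ (CARD('n) * CARD('m))"
  have "(\<integral>\<^sup>+x. indicator K x * Rmp_integrand K x \<theta> \<partial>lborel) \<le> (\<integral>\<^sup>+x. ennreal C * indicator K x \<partial>lborel)"
    using Rmp_integrand_le[OF K _ i0 B]
    by (intro nn_integral_mono) (auto simp: C_def split: split_indicator)
  also have "\<dots> = ennreal C * emeasure lborel K"
    using compact_imp_closed[OF K(1)] by (simp add: borel_closed nn_integral_cmult_indicator)
  also have "\<dots> < \<infinity>" using emeasure_compact_finite[OF K(1)] by (simp add: ennreal_mult_less_top)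
  finally show ?thesis .
qed

lemma integral_Min_powr_eq_nn_integral:
  fixes K :: "(real^'n) set" and \<theta> :: "real^'n^'m"
  assumes K: "compact K" "convex K" and \<theta>: "\<theta> \<noteq> 0"
  shows "integral K (\<lambda>x. (Min ((\<lambda>i. radial_fun ((\<lambda>z. z - x) ` K) (- (\<theta> $ i))) ` {i. \<theta> $ i \<noteq> 0}))
            powr real (CARD('n) * CARD('m)))
         = enn2real (\<integral>\<^sup>+x. indicator K x * Rmp_integrand K x \<theta> \<partial>lborel)"
proof -
  define J where "J = (\<integral>\<^sup>+x. indicator K x * Rmp_integrand K x \<theta> \<partial>lborel)"
  define h where "h x = (Min ((\<lambda>i. radial_fun ((\<lambda>z. z - x) ` K) (- (\<theta> $ i))) ` {i. \<theta> $ i \<noteq> 0}))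
            powr real (CARD('n) * CARD('m))" for x
  define g where "g x = indicator K x * h x" for x
  have Kc: "closed K" using K(1) by (rule compact_imp_closed)
  have h_eq: "x \<in> K \<Longrightarrow> ennreal (h x) = Rmp_integrand K x \<theta>" for x
    unfolding h_def using Rmp_integrand_eq_Min_powr[OF K _ \<theta>] by simp
  have g_eq: "g x = enn2real (indicator K x * Rmp_integrand K x \<theta>)" for x
    by (cases "x \<in> K") (auto simp: g_def h_eq[symmetric] h_def)
  have "(\<lambda>x. indicator K x * Rmp_integrand K x \<theta>) \<in> borel_measurable borel"
    using borel_measurable_Rmp_integrand_sections(1)[OF Kc] Kc
    by (intro borel_measurable_times_ennreal borel_measurable_indicator) (auto simp: borel_closed)
  then have g_measurable: "g \<in> borel_measurable borel"
    unfolding g_eq[abs_def] by (rule borel_measurable_enn2real)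
  have "(\<integral>\<^sup>+x. ennreal (g x) \<partial>lborel) = ennreal (enn2real J)"
    using nn_integral_Rmp_integrand_finite[OF K \<theta>]
    by (auto simp: J_def g_def h_eq intro!: nn_integral_cong split: split_indicator)
  then have "(g has_integral enn2real J) UNIV"
    by (intro nn_integral_has_integral[OF g_measurable]) (auto simp: g_def h_def)
  moreover have "g = (\<lambda>x. if x \<in> K then h x else 0)" by (auto simp: g_def fun_eq_iff)
  ultimately have "(h has_integral enn2real J) K" by (simp add: has_integral_restrict_UNIV)
  then show ?thesis unfolding h_def J_def by (rule integral_unique)
qed

definition Rmp_average :: "(real^'n) set \<Rightarrow> real^'n^'m \<Rightarrow> ennreal" where
  "Rmp_average K y =
     ennreal (1 / measure lebesgue K) * (\<integral>\<^sup>+x. indicator K x * Rmp_integrand K x y \<partial>lborel)"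

lemma borel_measurable_Rmp_average:
  fixes K :: "(real^'n) set"
  assumes "closed K"
  shows "(Rmp_average K :: real^'n^'m \<Rightarrow> ennreal) \<in> borel_measurable borel"
proof -
  note [measurable] = borel_measurable_Rmp_integrand_pair[OF assms, where 'm='m]
    borel_closed[OF assms]
  have "(\<lambda>y. \<integral>\<^sup>+x. indicator K x * Rmp_integrand K x y \<partial>lborel)
      \<in> borel_measurable (lborel :: (real^'n^'m) measure)"
    by (rule lborel.borel_measurable_nn_integral) (unfold case_prod_beta', measurable)
  then show ?thesis unfolding Rmp_average_def[abs_def] by simp
qed

lemma Rmp_average_scaleR:
  fixes K :: "(real^'n) set" and y :: "real^'n^'m"
  assumes K: "compact K" "convex K" and s: "s > 0"
  shows "Rmp_average K y = ennreal (s ^ (CARD('n) * CARD('m))) * Rmp_average K (s *\<^sub>R y)"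
proof -
  have Kc: "closed K" using K(1) by (rule compact_imp_closed)
  have "(\<integral>\<^sup>+x. indicator K x * Rmp_integrand K x y \<partial>lborel)
      = (\<integral>\<^sup>+x. ennreal (s ^ (CARD('n) * CARD('m))) * (indicator K x * Rmp_integrand K x (s *\<^sub>R y)) \<partial>lborel)"
  proof (rule nn_integral_cong)
    fix x
    show "indicator K x * Rmp_integrand K x y
      = ennreal (s ^ (CARD('n) * CARD('m))) * (indicator K x * Rmp_integrand K x (s *\<^sub>R y))"
    proof (cases "x \<in> K")
      case True
      then show ?thesis using Rmp_integrand_scaleR[OF K True s, of y] by simp
    qed simp
  qed
  also have "\<dots> = ennreal (s ^ (CARD('n) * CARD('m))) * (\<integral>\<^sup>+x. indicator K x * Rmp_integrand K x (s *\<^sub>R y) \<partial>lborel)"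
    using borel_measurable_Rmp_integrand_sections(1)[OF Kc] Kc
    by (intro nn_integral_cmult borel_measurable_times_ennreal borel_measurable_indicator)
      (auto simp: borel_closed)
  finally show ?thesis unfolding Rmp_average_def by (simp add: mult.left_commute)
qed

lemma nn_integral_Rmp_integrand_log_shell:
  fixes K :: "(real^'n) set"
  assumes K: "compact K" "convex K" "x \<in> K"
  shows "(\<integral>\<^sup>+y. Rmp_integrand K x y * indicator log_shell y \<partial>(lborel :: (real^'n^'m) measure))
    = emeasure lborel K ^ CARD('m)"
proof -
  have Kc: "closed K" using K(1) by (rule compact_imp_closed)
  have "(\<integral>\<^sup>+y. Rmp_integrand K x y * indicator log_shell y \<partial>(lborel :: (real^'n^'m) measure))
      = emeasure lborel {y::real^'n^'m. 1 \<le> Rmp_integrand K x y}"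
  proof (rule nn_integral_homogeneous_log_shell)
    show "Rmp_integrand K x \<in> borel_measurable borel"
      by (rule borel_measurable_Rmp_integrand_sections(2)[OF Kc])
    show "Rmp_integrand K x y = ennreal (s ^ DIM(real^'n^'m)) * Rmp_integrand K x (s *\<^sub>R y)"
      if "s > 0" for s and y :: "real^'n^'m"
      unfolding DIM_vec_vec by (rule Rmp_integrand_scaleR[OF K that])
  qed
  also have "{y::real^'n^'m. 1 \<le> Rmp_integrand K x y} = {y. \<forall>i. x - y$i \<in> K}"
    using one_le_Rmp_integrand_iff[OF K] by blast
  also have "emeasure lborel \<dots> = emeasure lborel K ^ CARD('m)"
    using Kc by (intro emeasure_lborel_vec_all_in_reflected) (rule borel_closed)
  finally show ?thesis .
qed

lemma nn_integral_Rmp_average_log_shell: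
  fixes K :: "(real^'n) set"
  assumes K: "compact K" "convex K" and V: "measure lebesgue K > 0"
  shows "(\<integral>\<^sup>+y. Rmp_average K y * indicator log_shell y \<partial>(lborel :: (real^'n^'m) measure))
    = ennreal (measure lebesgue K ^ CARD('m))"
proof -
  define V where "V = measure lebesgue K"
  have Kc: "closed K" using K(1) by (rule compact_imp_closed)
  have Kb[measurable]: "K \<in> sets borel" using Kc by (rule borel_closed)
  note [measurable] = borel_measurable_Rmp_integrand_pair[OF Kc, where 'm='m]
    borel_measurable_Rmp_integrand_sections(1)[OF Kc, where 'm='m]
  have emeasure_K: "emeasure lborel K = ennreal V"
    using emeasure_compact_finite[OF K(1)] by (simp add: V_def emeasure_eq_ennreal_measure)
  have inner_integral: "(\<integral>\<^sup>+y. indicator K x * Rmp_integrand K x y * indicator log_shell y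
      \<partial>(lborel :: (real^'n^'m) measure)) = ennreal (V ^ CARD('m)) * indicator K x" for x
    using nn_integral_Rmp_integrand_log_shell[OF K, of x, where 'm='m] emeasure_K V
    by (cases "x \<in> K") (simp_all add: V_def ennreal_power)
  have "(\<integral>\<^sup>+y. Rmp_average K y * indicator log_shell y \<partial>(lborel :: (real^'n^'m) measure))
      = (\<integral>\<^sup>+y. ennreal (1 / V) *
          (\<integral>\<^sup>+x. indicator K x * Rmp_integrand K x (y :: real^'n^'m) * indicator log_shell y \<partial>lborel) \<partial>lborel)"
  proof (rule nn_integral_cong)
    fix y :: "real^'n^'m"
    have "(\<integral>\<^sup>+x. indicator K x * Rmp_integrand K x y * indicator log_shell y \<partial>lborel)
        = (\<integral>\<^sup>+x. indicator K x * Rmp_integrand K x y \<partial>lborel) * indicator log_shell y"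
      by (rule nn_integral_multc) measurable
    then show "Rmp_average K y * indicator log_shell y
        = ennreal (1 / V) * (\<integral>\<^sup>+x. indicator K x * Rmp_integrand K x y * indicator log_shell y \<partial>lborel)"
      by (simp add: Rmp_average_def V_def mult.assoc)
  qed
  also have "\<dots> = ennreal (1 / V) * (\<integral>\<^sup>+y. (\<integral>\<^sup>+x.
      indicator K x * Rmp_integrand K x (y :: real^'n^'m) * indicator log_shell y \<partial>lborel) \<partial>lborel)"
    by (rule nn_integral_cmult, rule lborel.borel_measurable_nn_integral)
      (unfold case_prod_beta', measurable)
  also have "(\<integral>\<^sup>+y. (\<integral>\<^sup>+x. indicator K x * Rmp_integrand K x (y :: real^'n^'m) * indicator log_shell y \<partial>lborel) \<partial>lborel)
      = (\<integral>\<^sup>+x. (\<integral>\<^sup>+y. indicator K x * Rmp_integrand K x y * indicator log_shell y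
          \<partial>(lborel :: (real^'n^'m) measure)) \<partial>lborel)"
    by (rule lborel_pair.Fubini') (unfold case_prod_beta', measurable)
  also have "\<dots> = ennreal (V ^ CARD('m)) * ennreal V"
    using emeasure_K by (simp add: inner_integral nn_integral_cmult_indicator)
  also have "ennreal (1 / V) * (ennreal (V ^ CARD('m)) * ennreal V) = ennreal (V ^ CARD('m))"
    using V by (simp add: V_def flip: ennreal_mult)
  finally show ?thesis by (simp add: V_def)
qed

lemma le_powr_inverse_iff:
  fixes a q p :: real
  assumes "a \<ge> 0" "q \<ge> 0" "p > 0"
  shows "a \<le> q powr (1 / p) \<longleftrightarrow> a powr p \<le> q"
proof
  assume "a \<le> q powr (1 / p)"
  then have "a powr p \<le> (q powr (1 / p)) powr p" using assms by (intro powr_mono2) auto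
  then show "a powr p \<le> q" using assms by (simp add: powr_powr)
next
  assume "a powr p \<le> q"
  then have "(a powr p) powr (1 / p) \<le> q powr (1 / p)" using assms by (intro powr_mono2) auto
  then show "a \<le> q powr (1 / p)" using assms by (simp add: powr_powr)
qed

lemma norm_le_rho_Rmp_iff:
  fixes K :: "(real^'n) set" and z :: "real^'n^'m"
  assumes K: "compact K" "convex K" and V: "measure lebesgue K > 0" and z: "z \<noteq> 0"
  shows "norm z \<le> rho_Rmp (real (CARD('n) * CARD('m))) K ((1 / norm z) *\<^sub>R z)
           \<longleftrightarrow> 1 \<le> Rmp_average K z"
proof -
  define d where "d = CARD('n) * CARD('m)"
  define V where "V = measure lebesgue K"
  define \<theta> where "\<theta> = (1 / norm z) *\<^sub>R z"
  define J where "J = enn2real (\<integral>\<^sup>+x. indicator K x * Rmp_integrand K x \<theta> \<partial>lborel)"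
  have nz: "norm z > 0" using z by simp
  have \<theta>: "\<theta> \<noteq> 0" using z by (simp add: \<theta>_def)
  have J: "0 \<le> J" by (simp add: J_def)
  have rho: "rho_Rmp (real d) K \<theta> = (J / V) powr (1 / real d)"
    unfolding d_def rho_Rmp_def integral_Min_powr_eq_nn_integral[OF K \<theta>]
    by (simp add: J_def V_def)
  have "ennreal (norm z ^ d) * Rmp_average K z = Rmp_average K \<theta>"
    using Rmp_average_scaleR[OF K nz, of \<theta>] z by (simp add: \<theta>_def d_def)
  also have "\<dots> = ennreal (J / V)"
  proof -
    have "(\<integral>\<^sup>+x. indicator K x * Rmp_integrand K x \<theta> \<partial>lborel) = ennreal J"
      using nn_integral_Rmp_integrand_finite[OF K \<theta>] by (simp add: J_def)
    then show ?thesis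
      using V J by (simp add: Rmp_average_def V_def flip: ennreal_mult)
  qed
  finally have average: "ennreal (norm z ^ d) * Rmp_average K z = ennreal (J / V)" .
  have "1 \<le> Rmp_average K z \<longleftrightarrow> ennreal (norm z ^ d) * 1 \<le> ennreal (norm z ^ d) * Rmp_average K z"
    using nz by (subst ennreal_mult_le_mult_iff) auto
  also have "\<dots> \<longleftrightarrow> ennreal (norm z ^ d) \<le> ennreal (J / V)" by (simp add: average)
  also have "\<dots> \<longleftrightarrow> norm z powr real d \<le> J / V"
    using nz J V by (simp add: powr_realpow V_def)
  also have "\<dots> \<longleftrightarrow> norm z \<le> rho_Rmp (real d) K \<theta>"
    unfolding rho using J V by (intro le_powr_inverse_iff[symmetric]) (auto simp: V_def d_def)
  finally show ?thesis by (simp add: \<theta>_def d_def)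
qed

lemma Rmp_eq_insert_superlevel:
  fixes K :: "(real^'n) set"
  assumes K: "compact K" "convex K" and V: "measure lebesgue K > 0"
  shows "(Rmp (real (CARD('n) * CARD('m))) K :: (real^'n^'m) set)
           = insert 0 {y. 1 \<le> Rmp_average K y}"
proof (intro set_eqI iffI)
  fix w :: "real^'n^'m"
  assume "w \<in> Rmp (real (CARD('n) * CARD('m))) K"
  then obtain r \<theta> where w: "w = r *\<^sub>R \<theta>" "norm \<theta> = 1" "0 \<le> r"
      and r: "r \<le> rho_Rmp (real (CARD('n) * CARD('m))) K \<theta>"
    unfolding Rmp_def by blast
  show "w \<in> insert 0 {y. 1 \<le> Rmp_average K y}"
  proof (cases "r = 0")
    case False
    then have "w \<noteq> 0" "norm w = r" "(1 / norm w) *\<^sub>R w = \<theta>" using w by auto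
    then show ?thesis using norm_le_rho_Rmp_iff[OF K V \<open>w \<noteq> 0\<close>] r by simp
  qed (simp add: w)
next
  fix w :: "real^'n^'m"
  assume w: "w \<in> insert 0 {y. 1 \<le> Rmp_average K y}"
  show "w \<in> Rmp (real (CARD('n) * CARD('m))) K"
  proof (cases "w = 0")
    case True
    obtain b :: "real^'n^'m" where "b \<in> Basis" using nonempty_Basis by blast
    then have "w = 0 *\<^sub>R b" "norm b = 1" "0 \<le> rho_Rmp (real (CARD('n) * CARD('m))) K b"
      using True by (simp_all add: norm_Basis rho_Rmp_def)
    then show ?thesis unfolding Rmp_def by blast
  next
    case False
    then have "norm w \<le> rho_Rmp (real (CARD('n) * CARD('m))) K ((1 / norm w) *\<^sub>R w)"
      using w norm_le_rho_Rmp_iff[OF K V False] by simp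
    moreover have "w = norm w *\<^sub>R ((1 / norm w) *\<^sub>R w)" "norm ((1 / norm w) *\<^sub>R w) = 1"
      using False by simp_all
    ultimately show ?thesis
      unfolding Rmp_def by (intro CollectI exI[of _ "norm w"] exI[of _ "(1 / norm w) *\<^sub>R w"]) simp
  qed
qed

lemma measure_pos_if_interior_nonempty:
  fixes K :: "'a::euclidean_space set"
  assumes "compact K" "interior K \<noteq> {}"
  shows "measure lebesgue K > 0"
proof -
  have "\<not> negligible K"
    using assms(2) open_not_negligible[of "interior K"] interior_subset negligible_subset by blast
  moreover have "K \<in> sets lebesgue"
    using assms(1) by (simp add: borel_closed compact_imp_closed)
  moreover have "emeasure lebesgue K < \<infinity>"
    using emeasure_compact_finite[OF assms(1)] assms(1)
    by (simp add: borel_closed compact_imp_closed)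
  ultimately show ?thesis
    by (metis emeasure_eq_ennreal_measure ennreal_0 infinity_ennreal_def measure_nonneg
        negligible_iff_null_sets null_setsI order_less_le top.not_eq_extremum)
qed

lemma emeasure_superlevel_Rmp_average:
  fixes K :: "(real^'n) set"
  assumes K: "compact K" "convex K" and V: "measure lebesgue K > 0"
  shows "emeasure lborel {y::real^'n^'m. 1 \<le> Rmp_average K y} = ennreal (measure lebesgue K ^ CARD('m))"
proof -
  have "emeasure lborel {y::real^'n^'m. 1 \<le> Rmp_average K y}
      = (\<integral>\<^sup>+y. Rmp_average K y * indicator log_shell y \<partial>(lborel :: (real^'n^'m) measure))"
  proof (rule nn_integral_homogeneous_log_shell[symmetric])
    show "Rmp_average K \<in> borel_measurable borel"
      by (rule borel_measurable_Rmp_average[OF compact_imp_closed[OF K(1)]])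
    show "Rmp_average K y = ennreal (s ^ DIM(real^'n^'m)) * Rmp_average K (s *\<^sub>R y)"
      if "s > 0" for s and y :: "real^'n^'m"
      unfolding DIM_vec_vec by (rule Rmp_average_scaleR[OF K that])
  qed
  also have "\<dots> = ennreal (measure lebesgue K ^ CARD('m))"
    by (rule nn_integral_Rmp_average_log_shell[OF K V])
  finally show ?thesis .
qed

theorem proposition5p3:
  fixes K :: "(real^'n) set"
  assumes "convex_body K"
  shows "measure lebesgue (Rmp (real (CARD('n) * CARD('m))) K :: (real^'n^'m) set)
           = measure lebesgue K ^ CARD('m)"
proof -
  from assms have K: "compact K" "convex K" and "interior K \<noteq> {}"
    by (auto simp: convex_body_def)
  then have V: "measure lebesgue K > 0" by (intro measure_pos_if_interior_nonempty)
  have superlevel: "{y. 1 \<le> Rmp_average K y} \<in> sets (borel :: (real^'n^'m) measure)"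
    using borel_measurable_Rmp_average[OF compact_imp_closed[OF K(1)]] by measurable
  have "emeasure lebesgue (Rmp (real (CARD('n) * CARD('m))) K :: (real^'n^'m) set)
      = emeasure lborel (insert 0 {y::real^'n^'m. 1 \<le> Rmp_average K y})"
    using superlevel unfolding Rmp_eq_insert_superlevel[OF K V] by (simp del: insert_iff)
  also have "\<dots> = emeasure lborel {y::real^'n^'m. 1 \<le> Rmp_average K y}"
    using superlevel by (rule emeasure_lborel_insert)
  also have "\<dots> = ennreal (measure lebesgue K ^ CARD('m))"
    by (rule emeasure_superlevel_Rmp_average[OF K V])
  finally show ?thesis unfolding measure_def by simp
qed

end
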